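(* Let $X$ and $Y$ be random variables on a probability space $(\Omega,\mathcal{F},\mathbb{P})$ taking values in Polish spaces $(\mathbb{S}_1,\rho_1)$ and $(\mathbb{S}_2,\rho_2)$, respectively. If the law of $Y$ is atomless, then for every $\epsilon>0$ there exists a random variable $Z$ with values in $\mathbb{S}_2$ such that $\mathrm{Law}(Z)=\mathrm{Law}(Y)$, $\rho_2(Y,Z)\le\epsilon$ a.s., and $X$ is $Z$-measurable, i.e. $X=f(Z)$ a.s. for some Borel function $f:\mathbb{S}_2\to\mathbb{S}_1$. *)

theory Defs
  imports "HOL-Probability.Probability"
begin

definition atomless :: "'a measure \<Rightarrow> bool" where
  "atomless N \<longleftrightarrow>
     \<not> (\<exists>A\<in>sets N. measure N A > 0 \<and>
           (\<forall>B\<in>sets N. B \<subseteq> A \<longrightarrow> measure N B = 0 \<or> measure N B = measure N A))"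

end

theory Submission
  imports Defs
begin

text \<open>
  Every Polish space embeds into \<open>\<real>\<close> by a Borel injection with a Borel left inverse, and the
  embedding can be shifted so that its ceiling is any prescribed Borel integer label. Cut
  \<open>\<S>\<^sub>2\<close> into countably many Borel cells of diameter \<open>< \<epsilon>\<close> and encode both \<open>(Y, X)\<close> and \<open>Y\<close>
  as reals \<open>V\<close> and \<open>e(Y)\<close> whose ceiling is the cell of \<open>Y\<close>. Since the law of \<open>Y\<close> is atomless,
  both have continuous distribution functions, so the quantile coupling \<open>W\<close>, the quantile of
  the law of \<open>e(Y)\<close> taken at the uniform variable \<open>F\<^sub>V(V)\<close>, has the law of \<open>e(Y)\<close> and determines
  \<open>V\<close> almost surely.
  The two distribution functions agree at the integers, hence \<open>W\<close> and \<open>V\<close> have the same ceiling.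
  Decoding \<open>W\<close> gives \<open>Z\<close> with the law of \<open>Y\<close>, in the cell of \<open>Y\<close>, and with \<open>X\<close> a Borel
  function of \<open>V\<close>, hence of \<open>Z\<close>.
\<close>

section \<open>Borel embeddings of Polish spaces into the reals\<close>

definition quaternary :: "(nat \<Rightarrow> bool) \<Rightarrow> real" where
  "quaternary b = (\<Sum>n. of_bool (b n) / 4 ^ Suc n)"

lemma sums_quarter_powers: "(\<lambda>n. (1/4::real) ^ Suc n) sums (1/3)"
  using sums_mult[OF geometric_sums[of "1/4::real"], of "1/4"] by simp

lemma summable_quaternary: "summable (\<lambda>n. of_bool (b n) / 4 ^ Suc n :: real)"
  by (rule summable_comparison_test'[OF sums_summable[OF sums_quarter_powers], of 0])
     (simp add: power_divide)

lemma quaternary_nonneg: "0 \<le> quaternary b"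
  unfolding quaternary_def by (rule suminf_nonneg[OF summable_quaternary]) simp

lemma quaternary_less_1: "quaternary b < 1"
proof -
  have "quaternary b \<le> 1/3"
    unfolding quaternary_def sums_unique[OF sums_quarter_powers]
    by (rule suminf_le[OF _ summable_quaternary sums_summable[OF sums_quarter_powers]])
       (simp add: power_divide)
  then show ?thesis by simp
qed

lemma odd_floor_quaternary: "odd \<lfloor>4 ^ Suc N * quaternary b\<rfloor> \<longleftrightarrow> b N"
proof -
  define A :: int where "A = (\<Sum>n<Suc N. of_bool (b n) * 4 ^ (N - n))"
  have tail: "4 ^ Suc N * (\<Sum>n. of_bool (b (n + Suc N)) / 4 ^ Suc (n + Suc N)) =
      quaternary (\<lambda>n. b (n + Suc N))"
  proof -
    have shift: "(\<lambda>n. of_bool (b (n + Suc N)) / 4 ^ Suc (n + Suc N) :: real) =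
        (\<lambda>n. of_bool (b (n + Suc N)) / 4 ^ Suc n / 4 ^ Suc N)"
      by (simp add: power_add)
    have "(\<Sum>n. of_bool (b (n + Suc N)) / 4 ^ Suc n / 4 ^ Suc N) =
        quaternary (\<lambda>n. b (n + Suc N)) / 4 ^ Suc N"
      unfolding quaternary_def by (rule suminf_divide[OF summable_quaternary])
    then show ?thesis unfolding shift by simp
  qed
  have head: "4 ^ Suc N * (\<Sum>n<Suc N. of_bool (b n) / 4 ^ Suc n) = (of_int A :: real)"
    unfolding A_def sum_distrib_left of_int_sum
    by (intro sum.cong) (auto simp: field_simps power_add[symmetric])
  have "4 ^ Suc N * quaternary b = of_int A + quaternary (\<lambda>n. b (n + Suc N))"
    unfolding quaternary_def[of b] suminf_split_initial_segment[OF summable_quaternary, of b "Suc N"]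
    by (simp only: distrib_left tail head add.commute)
  then have "\<lfloor>4 ^ Suc N * quaternary b\<rfloor> = A"
    using quaternary_nonneg quaternary_less_1 by (simp add: floor_eq_iff)
  moreover have "A = of_bool (b N) + (\<Sum>n<N. of_bool (b n) * 4 ^ (N - n))"
    unfolding A_def by simp
  moreover have "even (\<Sum>n<N. of_bool (b n) * (4::int) ^ (N - n))"
    by (intro dvd_sum) auto
  ultimately show ?thesis by auto
qed

lemma dense_sequenceE:
  obtains d :: "nat \<Rightarrow> 'a::{second_countable_topology, metric_space}"
  where "\<And>y e. e > 0 \<Longrightarrow> \<exists>j. dist (d j) y < e"
proof -
  obtain D :: "'a set" where D: "countable D" "\<And>X. open X \<Longrightarrow> X \<noteq> {} \<Longrightarrow> \<exists>d\<in>D. d \<in> X"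
    using countable_dense_setE by blast
  have "D \<noteq> {}" using D(2)[of UNIV] by auto
  show ?thesis
  proof
    fix y :: 'a and e :: real assume "e > 0"
    then obtain x where "x \<in> D" "x \<in> ball y e" using D(2)[of "ball y e"] by auto
    moreover obtain j where "x = from_nat_into D j"
      using range_from_nat_into[OF \<open>D \<noteq> {}\<close> D(1)] \<open>x \<in> D\<close> by blast
    ultimately show "\<exists>j. dist (from_nat_into D j) y < e" by (auto simp: dist_commute)
  qed
qed

lemma small_cellsE:
  fixes r :: real
  assumes "r > 0"
  obtains cell :: "'a::{second_countable_topology, metric_space} \<Rightarrow> int" and center :: "int \<Rightarrow> 'a"
  where "cell \<in> measurable borel (count_space UNIV)" "\<And>y. dist (center (cell y)) y < r"
proof -
  obtain d :: "nat \<Rightarrow> 'a" where d: "\<And>y e. e > 0 \<Longrightarrow> \<exists>j. dist (d j) y < e"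
    using dense_sequenceE by blast
  define cell where "cell y = int (LEAST j. dist (d j) y < r)" for y
  have "cell \<in> measurable borel (count_space UNIV)"
    unfolding cell_def by measurable
  moreover have "dist (d (nat (cell y))) y < r" for y
    unfolding cell_def nat_int by (rule LeastI_ex) (use d[of r y] assms in auto)
  ultimately show ?thesis
    using that[of cell "\<lambda>k. d (nat k)"] by blast
qed

lemma borel_embedding_into_unit_interval:
  obtains h :: "'a::polish_space \<Rightarrow> real" and g :: "real \<Rightarrow> 'a"
  where "h \<in> borel_measurable borel" "g \<in> borel_measurable borel"
    "\<And>y. g (h y) = y" "\<And>y. h y \<in> {0..<1}"
proof -
  obtain d :: "nat \<Rightarrow> 'a" where d: "\<And>y e. e > 0 \<Longrightarrow> \<exists>j. dist (d j) y < e"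
    using dense_sequenceE by blast
  \<comment> \<open>Digit \<open>prod_encode (j, m)\<close> of \<open>h y\<close> records whether \<open>d j\<close> is \<open>1/(m+1)\<close>-close to \<open>y\<close>.
    Base 4 with digits 0 and 1 makes the digits readable without carries; \<open>g\<close> takes the limit
    of the first recorded centres.\<close>
  define near where "near y n = (dist (d (fst (prod_decode n))) y < 1 / Suc (snd (prod_decode n)))"
    for y n
  define h where "h y = quaternary (near y)" for y
  define digit where "digit t n = odd \<lfloor>4 ^ Suc n * t\<rfloor>" for t :: real and n
  define approx where "approx m t = d (LEAST j. digit t (prod_encode (j, m)))" for m t
  define g where "g t = (if Cauchy (\<lambda>m. approx m t) then lim (\<lambda>m. approx m t) else d 0)" for t
  have digit_h: "digit (h y) (prod_encode (j, m)) \<longleftrightarrow> dist (d j) y < 1 / Suc m" for y j m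
    unfolding digit_def h_def odd_floor_quaternary by (simp add: near_def)
  have approx_h: "dist (approx m (h y)) y < 1 / Suc m" for y m
  proof -
    obtain j where "dist (d j) y < 1 / Suc m" using d[of "1 / Suc m" y] by auto
    then have "\<exists>j. digit (h y) (prod_encode (j, m))" by (auto simp: digit_h)
    from LeastI_ex[OF this] show ?thesis by (simp add: approx_def digit_h)
  qed
  have approx_lim: "(\<lambda>m. approx m (h y)) \<longlonglongrightarrow> y" for y
  proof (rule tendsto_dist_iff[THEN iffD2])
    show "(\<lambda>m. dist (approx m (h y)) y) \<longlonglongrightarrow> 0"
      using approx_h by (intro tendsto_sandwich[OF _ _ tendsto_const LIMSEQ_inverse_real_of_nat])
         (auto intro!: always_eventually less_imp_le simp: inverse_eq_divide)
  qed
  have "g (h y) = y" for y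
    using approx_lim[of y] by (auto simp: g_def LIMSEQ_imp_Cauchy limI)
  moreover have "h \<in> borel_measurable borel"
    unfolding h_def quaternary_def near_def by measurable
  moreover have "g \<in> borel_measurable borel"
  proof (rule borel_measurable_LIMSEQ_metric)
    have [measurable]: "approx m \<in> borel_measurable borel" for m
      unfolding approx_def digit_def by measurable
    show "(\<lambda>t. if Cauchy (\<lambda>m. approx m t) then approx i t else d 0) \<in> borel_measurable borel" for i
      by measurable
    show "(\<lambda>i. if Cauchy (\<lambda>m. approx m t) then approx i t else d 0) \<longlonglongrightarrow> g t" for t
      by (auto simp: g_def Cauchy_convergent_iff convergent_LIMSEQ_iff)
  qed
  moreover have "h y \<in> {0..<1}" for y
    by (simp add: h_def quaternary_nonneg quaternary_less_1)
  ultimately show ?thesis using that by blast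
qed

lemma borel_embedding_into_real_with_ceiling:
  fixes c :: "'a::polish_space \<Rightarrow> int"
  assumes [measurable]: "c \<in> measurable borel (count_space UNIV)"
  obtains e :: "'a \<Rightarrow> real" and g :: "real \<Rightarrow> 'a"
  where "e \<in> borel_measurable borel" "g \<in> borel_measurable borel"
    "\<And>y. g (e y) = y" "\<And>y. \<lceil>e y\<rceil> = c y"
proof -
  obtain h :: "'a \<Rightarrow> real" and g where [measurable]: "h \<in> borel_measurable borel" "g \<in> borel_measurable borel"
    and inv: "\<And>y. g (h y) = y" and range: "\<And>y. h y \<in> {0..<1}"
    using borel_embedding_into_unit_interval by blast
  have [measurable]: "(\<lambda>t::real. real_of_int \<lceil>t\<rceil>) \<in> borel_measurable borel"
    by measurable
  have ceiling: "\<lceil>c y - h y\<rceil> = c y" for y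
    using range[of y] by (simp add: ceiling_eq_iff)
  show ?thesis
  proof
    show "(\<lambda>y. c y - h y) \<in> borel_measurable borel" "(\<lambda>t::real. g (of_int \<lceil>t\<rceil> - t)) \<in> borel_measurable borel"
      by measurable
    show "g (of_int \<lceil>c y - h y\<rceil> - (c y - h y)) = y" "\<lceil>c y - h y\<rceil> = c y" for y
      by (simp_all add: ceiling inv)
  qed
qed

section \<open>Quantile functions\<close>

definition to_open_unit :: "real \<Rightarrow> real" where
  "to_open_unit u = (if u \<in> {0<..<1} then u else 1/2)"

lemma to_open_unit_in: "to_open_unit u \<in> {0<..<1}"
  by (simp add: to_open_unit_def)

lemma to_open_unit_eq: "u \<in> {0<..<1} \<Longrightarrow> to_open_unit u = u"
  by (simp add: to_open_unit_def)

lemma borel_measurable_to_open_unit[measurable]: "to_open_unit \<in> borel_measurable borel"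
  unfolding to_open_unit_def by measurable

text \<open>Outside \<open>(0, 1)\<close> the infimum below is junk; replacing such arguments by \<open>1/2\<close> makes
  \<open>quantile N\<close> a Borel function on all of \<open>\<real>\<close>.\<close>

definition quantile :: "real measure \<Rightarrow> real \<Rightarrow> real" where
  "quantile N u = Inf {x. to_open_unit u \<le> cdf N x}"

lemma borel_measurable_quantile:
  assumes "real_distribution N"
  shows "quantile N \<in> borel_measurable borel"
proof -
  interpret cdf_distribution N using assms by (simp add: cdf_distribution_def)
  have "to_open_unit \<in> measurable borel (restrict_space borel {0<..<1})"
    by (rule measurable_restrict_space2) (use to_open_unit_in in auto)
  from measurable_compose[OF this measurable_CI] show ?thesis
    unfolding quantile_def[abs_def] .
qed

lemma borel_measurable_cdf:
  assumes "real_distribution N"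
  shows "cdf N \<in> borel_measurable borel"
  using assms cdf_distribution.measurable_C by (simp add: cdf_distribution_def)

lemma quantile_le_iff:
  assumes "real_distribution N" and "u \<in> {0<..<1}"
  shows "quantile N u \<le> x \<longleftrightarrow> u \<le> cdf N x"
proof -
  interpret cdf_distribution N using assms(1) by (simp add: cdf_distribution_def)
  show ?thesis
    using pseudoinverse[of u x] assms(2) by (simp add: quantile_def to_open_unit_eq)
qed

lemma measure_lessThan_eq_cdf:
  assumes "real_distribution N" and "measure N {x} = 0"
  shows "measure N {..<x} = cdf N x"
proof -
  interpret real_distribution N by fact
  have "cdf N x = measure N ({..<x} \<union> {x})"
    by (simp add: cdf_def ivl_disj_un(2)[symmetric])
  also have "\<dots> = measure N {..<x}"
    using assms(2) by (subst finite_measure_Union) auto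
  finally show ?thesis by simp
qed

lemma cdf_quantile:
  assumes N: "real_distribution N" and no_atoms: "\<And>x. measure N {x} = 0"
    and u: "u \<in> {0<..<1}"
  shows "cdf N (quantile N u) = u"
proof (rule antisym)
  interpret real_distribution N by (rule N)
  let ?q = "quantile N u"
  have "cdf N x \<le> u" if "x < ?q" for x
    using quantile_le_iff[OF N u, of x] that by auto
  then have "\<forall>\<^sub>F x in at_left ?q. cdf N x \<le> u"
    using eventually_at_left_real[of "?q - 1" ?q] by (auto elim: eventually_mono)
  with cdf_at_left[of ?q] have "measure N {..<?q} \<le> u"
    by (intro tendsto_upperbound) auto
  then show "cdf N ?q \<le> u"
    using measure_lessThan_eq_cdf[OF N no_atoms] by simp
  show "u \<le> cdf N ?q"
    using quantile_le_iff[OF N u, of ?q] by simp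
qed

lemma ceiling_eq_if_int_bounds_eq:
  fixes x y :: real
  assumes "\<And>k::int. x \<le> of_int k \<longleftrightarrow> y \<le> of_int k"
  shows "\<lceil>x\<rceil> = \<lceil>y\<rceil>"
  using assms by (metis antisym ceiling_le_iff order_refl)

section \<open>The quantile coupling\<close>

context prob_space
begin

lemma prob_cdf_less:
  assumes V[measurable]: "V \<in> borel_measurable M"
    and no_atoms: "\<And>v. measure (distr M borel V) {v} = 0" and u: "u \<in> {0<..<1}"
  shows "prob {\<omega>\<in>space M. cdf (distr M borel V) (V \<omega>) < u} = u"
proof -
  let ?L = "distr M borel V"
  let ?q = "quantile ?L u"
  have L: "real_distribution ?L" by simp
  have "{\<omega>\<in>space M. cdf ?L (V \<omega>) < u} = V -` {..<?q} \<inter> space M"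
    using quantile_le_iff[OF L u] by (auto simp: not_le[symmetric])
  then have "prob {\<omega>\<in>space M. cdf ?L (V \<omega>) < u} = measure ?L {..<?q}"
    by (simp add: measure_distr)
  also have "\<dots> = u"
    using measure_lessThan_eq_cdf[OF L no_atoms] cdf_quantile[OF L no_atoms u] by simp
  finally show ?thesis .
qed

lemma prob_cdf_le:
  assumes V[measurable]: "V \<in> borel_measurable M"
    and no_atoms: "\<And>v. measure (distr M borel V) {v} = 0" and c: "c \<in> {0..1}"
  shows "prob {\<omega>\<in>space M. cdf (distr M borel V) (V \<omega>) \<le> c} = c"
proof -
  let ?F = "cdf (distr M borel V)"
  have [measurable]: "?F \<in> borel_measurable borel" by (simp add: borel_measurable_cdf)
  have "prob {\<omega>\<in>space M. ?F (V \<omega>) \<le> c} \<le> c + e" if "e > 0" for e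
  proof (cases "c + e < 1")
    case True
    have "prob {\<omega>\<in>space M. ?F (V \<omega>) \<le> c} \<le> prob {\<omega>\<in>space M. ?F (V \<omega>) < c + e}"
      using \<open>e > 0\<close> by (intro finite_measure_mono) auto
    also have "\<dots> = c + e"
      using prob_cdf_less[OF V no_atoms, of "c + e"] True c \<open>e > 0\<close> by simp
    finally show ?thesis .
  next
    case False
    then show ?thesis using prob_le_1[of "{\<omega>\<in>space M. ?F (V \<omega>) \<le> c}"] by linarith
  qed
  then have upper: "prob {\<omega>\<in>space M. ?F (V \<omega>) \<le> c} \<le> c"
    by (rule field_le_epsilon)
  consider "c = 0" | "c \<in> {0<..<1}" | "c = 1" using c by force
  then have "c \<le> prob {\<omega>\<in>space M. ?F (V \<omega>) \<le> c}"
  proof cases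
    case 2
    have "c = prob {\<omega>\<in>space M. ?F (V \<omega>) < c}"
      using prob_cdf_less[OF V no_atoms 2] by simp
    also have "\<dots> \<le> prob {\<omega>\<in>space M. ?F (V \<omega>) \<le> c}"
      by (intro finite_measure_mono) auto
    finally show ?thesis .
  next
    case 3
    then have "{\<omega>\<in>space M. ?F (V \<omega>) \<le> c} = space M"
      using real_distribution.cdf_bounded_prob[of "distr M borel V"] by auto
    then show ?thesis using 3 by (simp add: prob_space)
  qed simp
  with upper show ?thesis by simp
qed

lemma AE_cdf_in_open_unit:
  assumes V[measurable]: "V \<in> borel_measurable M"
    and no_atoms: "\<And>v. measure (distr M borel V) {v} = 0"
  shows "AE \<omega> in M. cdf (distr M borel V) (V \<omega>) \<in> {0<..<1}"
proof -
  let ?F = "cdf (distr M borel V)"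
  let ?bad = "{\<omega>\<in>space M. ?F (V \<omega>) \<notin> {0<..<1}}"
  have [measurable]: "?F \<in> borel_measurable borel" by (simp add: borel_measurable_cdf)
  have small: "prob ?bad \<le> e" if e: "e \<in> {0<..<1}" for e
  proof -
    have "?bad \<subseteq> {\<omega>\<in>space M. ?F (V \<omega>) \<le> 0} \<union> (space M - {\<omega>\<in>space M. ?F (V \<omega>) \<le> 1 - e})"
    proof (intro subsetI)
      fix \<omega> assume "\<omega> \<in> ?bad"
      moreover have "?F (V \<omega>) \<le> 1" by (simp add: real_distribution.cdf_bounded_prob)
      ultimately show "\<omega> \<in> {\<omega>\<in>space M. ?F (V \<omega>) \<le> 0} \<union> (space M - {\<omega>\<in>space M. ?F (V \<omega>) \<le> 1 - e})"
        using e by auto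
    qed
    then have "prob ?bad \<le> prob ({\<omega>\<in>space M. ?F (V \<omega>) \<le> 0} \<union>
        (space M - {\<omega>\<in>space M. ?F (V \<omega>) \<le> 1 - e}))"
      by (rule finite_measure_mono) measurable
    also have "\<dots> \<le> prob {\<omega>\<in>space M. ?F (V \<omega>) \<le> 0} +
        prob (space M - {\<omega>\<in>space M. ?F (V \<omega>) \<le> 1 - e})"
      by (rule measure_Un_le) measurable
    also have "\<dots> = e"
      using e prob_cdf_le[OF V no_atoms, of 0] prob_cdf_le[OF V no_atoms, of "1 - e"]
        prob_compl[of "{\<omega>\<in>space M. ?F (V \<omega>) \<le> 1 - e}"] by simp
    finally show ?thesis .
  qed
  have "prob ?bad \<le> 0 + e" if "e > 0" for e
    using small[of "min e (1/2)"] that by simp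
  then have "prob ?bad \<le> 0"
    by (rule field_le_epsilon)
  then have "prob ?bad = 0"
    using measure_nonneg[of M ?bad] by linarith
  then show ?thesis
    by (intro AE_I[where N="?bad"]) (auto simp: emeasure_eq_measure)
qed

lemma distr_quantile_cdf:
  assumes V[measurable]: "V \<in> borel_measurable M"
    and no_atoms: "\<And>v. measure (distr M borel V) {v} = 0"
    and N: "real_distribution N"
  shows "distr M borel (\<lambda>\<omega>. quantile N (to_open_unit (cdf (distr M borel V) (V \<omega>)))) = N"
proof -
  let ?F = "cdf (distr M borel V)"
  let ?W = "\<lambda>\<omega>. quantile N (to_open_unit (?F (V \<omega>)))"
  interpret N: real_distribution N by (rule N)
  have [measurable]: "?F \<in> borel_measurable borel" by (simp add: borel_measurable_cdf)
  have [measurable]: "quantile N \<in> borel_measurable borel" using N by (rule borel_measurable_quantile)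
  have "cdf (distr M borel ?W) x = cdf N x" for x
  proof -
    have "cdf (distr M borel ?W) x = prob {\<omega>\<in>space M. ?W \<omega> \<le> x}"
      by (simp add: cdf_def measure_distr vimage_def Int_def conj_commute)
    also have "\<dots> = prob {\<omega>\<in>space M. to_open_unit (?F (V \<omega>)) \<le> cdf N x}"
      using quantile_le_iff[OF N to_open_unit_in] by simp
    also have "\<dots> = prob {\<omega>\<in>space M. ?F (V \<omega>) \<le> cdf N x}"
      by (rule finite_measure_eq_AE)
         (use AE_cdf_in_open_unit[OF V no_atoms] in \<open>auto simp: to_open_unit_eq\<close>)
    also have "\<dots> = cdf N x"
      using prob_cdf_le[OF V no_atoms] N.cdf_nonneg N.cdf_bounded_prob by simp
    finally show ?thesis .
  qed
  then show ?thesis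
    by (intro cdf_unique N ext) simp
qed

lemma AE_eq_if_AE_le_and_distr_eq:
  fixes V W :: "'a \<Rightarrow> real"
  assumes [measurable]: "V \<in> borel_measurable M" "W \<in> borel_measurable M"
    and distr_eq: "distr M borel W = distr M borel V" and le: "AE \<omega> in M. W \<omega> \<le> V \<omega>"
  shows "AE \<omega> in M. V \<omega> = W \<omega>"
proof -
  have "AE \<omega> in M. W \<omega> \<le> r \<longrightarrow> V \<omega> \<le> r" for r
  proof -
    define A where "A = {\<omega>\<in>space M. V \<omega> \<le> r}"
    define B where "B = {\<omega>\<in>space M. W \<omega> \<le> r}"
    have [measurable]: "A \<in> sets M" "B \<in> sets M" unfolding A_def B_def by measurable
    have "prob A = prob B"
      using arg_cong[OF distr_eq, of "\<lambda>N. measure N {..r}"]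
      by (simp add: A_def B_def measure_distr vimage_def Int_def conj_commute)
    moreover have "prob (B \<inter> A) = prob A"
      by (rule finite_measure_eq_AE) (use le in \<open>auto simp: A_def B_def elim!: eventually_mono\<close>)
    ultimately have "prob (B - A) = 0" by (simp add: finite_measure_Diff')
    then have "AE \<omega> in M. \<omega> \<notin> B - A"
      by (intro AE_not_in) (auto simp: emeasure_eq_measure)
    then show ?thesis using AE_space by eventually_elim (auto simp: A_def B_def)
  qed
  then have "AE \<omega> in M. \<forall>q::rat. W \<omega> \<le> of_rat q \<longrightarrow> V \<omega> \<le> of_rat q"
    by (simp add: AE_all_countable)
  with le show ?thesis
  proof eventually_elim
    case (elim \<omega>)
    show ?case
    proof (rule ccontr)
      assume "V \<omega> \<noteq> W \<omega>"
      then have "W \<omega> < V \<omega>" using elim by simp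
      then obtain q where "W \<omega> < of_rat q" "of_rat q < V \<omega>" using of_rat_dense by blast
      then show False using elim(2) less_imp_le not_le by metis
    qed
  qed
qed

lemma AE_eq_quantile_cdf:
  assumes V[measurable]: "V \<in> borel_measurable M"
    and no_atoms: "\<And>v. measure (distr M borel V) {v} = 0"
  shows "AE \<omega> in M. V \<omega> = quantile (distr M borel V) (to_open_unit (cdf (distr M borel V) (V \<omega>)))"
proof (rule AE_eq_if_AE_le_and_distr_eq)
  let ?L = "distr M borel V"
  have L: "real_distribution ?L" by simp
  have [measurable]: "cdf ?L \<in> borel_measurable borel" "quantile ?L \<in> borel_measurable borel"
    using L by (simp_all add: borel_measurable_cdf borel_measurable_quantile)
  show "V \<in> borel_measurable M" "(\<lambda>\<omega>. quantile ?L (to_open_unit (cdf ?L (V \<omega>)))) \<in> borel_measurable M"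
    by measurable
  show "distr M borel (\<lambda>\<omega>. quantile ?L (to_open_unit (cdf ?L (V \<omega>)))) = ?L"
    using distr_quantile_cdf[OF V no_atoms L] .
  show "AE \<omega> in M. quantile ?L (to_open_unit (cdf ?L (V \<omega>))) \<le> V \<omega>"
    using AE_cdf_in_open_unit[OF V no_atoms]
    by eventually_elim (simp add: quantile_le_iff[OF L] to_open_unit_eq)
qed

text \<open>\<open>V\<close> and \<open>W\<close> are almost surely the quantiles, for their respective laws, of the same uniform
  variable \<open>to_open_unit (F\<^sub>V V)\<close>; hence they are comonotone, and \<open>V\<close> is recovered from \<open>W\<close>.\<close>

lemma quantile_coupling:
  fixes V :: "'a \<Rightarrow> real"
  assumes V[measurable]: "V \<in> borel_measurable M"
    and no_atoms: "\<And>v. measure (distr M borel V) {v} = 0"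
    and N: "real_distribution N" and no_atoms_N: "\<And>x. measure N {x} = 0"
  obtains W G where "W \<in> borel_measurable M" "distr M borel W = N"
    "G \<in> borel_measurable borel" "AE \<omega> in M. V \<omega> = G (W \<omega>)"
    "\<And>x. cdf (distr M borel V) x = cdf N x \<Longrightarrow> AE \<omega> in M. V \<omega> \<le> x \<longleftrightarrow> W \<omega> \<le> x"
proof
  let ?L = "distr M borel V"
  let ?U = "\<lambda>\<omega>. to_open_unit (cdf ?L (V \<omega>))"
  have L: "real_distribution ?L" by simp
  have [measurable]: "cdf ?L \<in> borel_measurable borel" "quantile ?L \<in> borel_measurable borel"
    "cdf N \<in> borel_measurable borel" "quantile N \<in> borel_measurable borel"
    using L N by (simp_all add: borel_measurable_cdf borel_measurable_quantile)
  have cdf_W: "cdf N (quantile N (?U \<omega>)) = ?U \<omega>" for \<omega>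
    by (rule cdf_quantile[OF N no_atoms_N to_open_unit_in])
  have AE_V: "AE \<omega> in M. V \<omega> = quantile ?L (?U \<omega>)"
    by (rule AE_eq_quantile_cdf[OF V no_atoms])
  show "(\<lambda>\<omega>. quantile N (?U \<omega>)) \<in> borel_measurable M" by measurable
  show "distr M borel (\<lambda>\<omega>. quantile N (?U \<omega>)) = N"
    by (rule distr_quantile_cdf[OF V no_atoms N])
  show "(\<lambda>w. quantile ?L (cdf N w)) \<in> borel_measurable borel" by measurable
  show "AE \<omega> in M. V \<omega> = quantile ?L (cdf N (quantile N (?U \<omega>)))"
    using AE_V by (simp add: cdf_W)
  show "AE \<omega> in M. V \<omega> \<le> x \<longleftrightarrow> quantile N (?U \<omega>) \<le> x" if "cdf ?L x = cdf N x" for x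
    using AE_V
  proof eventually_elim
    case (elim \<omega>)
    have "V \<omega> \<le> x \<longleftrightarrow> ?U \<omega> \<le> cdf ?L x"
      using quantile_le_iff[OF L to_open_unit_in] elim by metis
    also have "\<dots> \<longleftrightarrow> quantile N (?U \<omega>) \<le> x"
      using quantile_le_iff[OF N to_open_unit_in] that by simp
    finally show ?case .
  qed
qed

lemma cdf_distr_of_int_eq_if_ceiling_eq:
  fixes V V' :: "'a \<Rightarrow> real"
  assumes [measurable]: "V \<in> borel_measurable M" "V' \<in> borel_measurable M"
    and "\<And>\<omega>. \<omega> \<in> space M \<Longrightarrow> \<lceil>V \<omega>\<rceil> = \<lceil>V' \<omega>\<rceil>"
  shows "cdf (distr M borel V) (of_int k) = cdf (distr M borel V') (of_int k)"
proof -
  have "V -` {..of_int k} \<inter> space M = V' -` {..of_int k} \<inter> space M"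
    using assms(3) by (auto simp flip: ceiling_le_iff)
  then show ?thesis by (simp add: cdf_def measure_distr)
qed

lemma measure_distr_singleton_eq_0_if_factor:
  fixes V :: "'a \<Rightarrow> 'c::t1_space" and Y :: "'a \<Rightarrow> 'd::t1_space"
  assumes [measurable]: "V \<in> borel_measurable M" "Y \<in> borel_measurable M"
    and factor: "\<And>\<omega>. \<omega> \<in> space M \<Longrightarrow> Y \<omega> = R (V \<omega>)"
    and no_atoms: "\<And>y. measure (distr M borel Y) {y} = 0"
  shows "measure (distr M borel V) {v} = 0"
proof -
  have "measure (distr M borel V) {v} = prob (V -` {v} \<inter> space M)"
    by (simp add: measure_distr)
  also have "\<dots> \<le> prob (Y -` {R v} \<inter> space M)"
    using factor by (intro finite_measure_mono) auto
  also have "\<dots> = 0"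
    using no_atoms[of "R v"] by (simp add: measure_distr)
  finally show ?thesis by (simp add: measure_le_0_iff)
qed

lemma quantile_coupling_same_ceiling:
  fixes V V' :: "'a \<Rightarrow> real"
  assumes V[measurable]: "V \<in> borel_measurable M" and V'[measurable]: "V' \<in> borel_measurable M"
    and no_atoms: "\<And>v. measure (distr M borel V) {v} = 0"
    and no_atoms': "\<And>v. measure (distr M borel V') {v} = 0"
    and same_ceiling: "\<And>\<omega>. \<omega> \<in> space M \<Longrightarrow> \<lceil>V \<omega>\<rceil> = \<lceil>V' \<omega>\<rceil>"
  obtains W G where "W \<in> borel_measurable M" "distr M borel W = distr M borel V'"
    "G \<in> borel_measurable borel" "AE \<omega> in M. V \<omega> = G (W \<omega>)"
    "AE \<omega> in M. \<lceil>W \<omega>\<rceil> = \<lceil>V \<omega>\<rceil>"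
proof -
  obtain W G where W: "W \<in> borel_measurable M" "distr M borel W = distr M borel V'"
    "G \<in> borel_measurable borel" "AE \<omega> in M. V \<omega> = G (W \<omega>)"
    and same_bounds: "\<And>x. cdf (distr M borel V) x = cdf (distr M borel V') x \<Longrightarrow>
      AE \<omega> in M. V \<omega> \<le> x \<longleftrightarrow> W \<omega> \<le> x"
    using quantile_coupling[OF V no_atoms _ no_atoms'] by auto
  have "AE \<omega> in M. \<forall>k::int. V \<omega> \<le> of_int k \<longleftrightarrow> W \<omega> \<le> of_int k"
    using same_bounds[OF cdf_distr_of_int_eq_if_ceiling_eq[OF V V' same_ceiling]]
    by (simp add: AE_all_countable)
  then have "AE \<omega> in M. \<lceil>W \<omega>\<rceil> = \<lceil>V \<omega>\<rceil>"
    by eventually_elim (rule ceiling_eq_if_int_bounds_eq, simp)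
  with W show thesis by (rule that)
qed

end

section \<open>Coupling within Borel cells\<close>

lemma distr_left_inverse_transfer:
  fixes e :: "'b::topological_space \<Rightarrow> 'c::polish_space"
  assumes [measurable]: "W \<in> borel_measurable M" "Y \<in> borel_measurable M"
    "e \<in> borel_measurable borel" "g \<in> borel_measurable borel"
    and inv: "\<And>y. g (e y) = y" and distr_W: "distr M borel W = distr M borel (\<lambda>\<omega>. e (Y \<omega>))"
  shows "distr M borel (\<lambda>\<omega>. g (W \<omega>)) = distr M borel Y"
    and "AE \<omega> in M. e (g (W \<omega>)) = W \<omega>"
proof -
  have "distr M borel (\<lambda>\<omega>. g (W \<omega>)) = distr (distr M borel W) borel g"
    by (simp add: distr_distr comp_def)
  also have "\<dots> = distr M borel Y"
    by (simp add: distr_W distr_distr comp_def inv)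
  finally show "distr M borel (\<lambda>\<omega>. g (W \<omega>)) = distr M borel Y" .
  have "AE t in distr M borel (\<lambda>\<omega>. e (Y \<omega>)). e (g t) = t"
    by (subst AE_distr_iff) (auto simp: inv)
  then have "AE t in distr M borel W. e (g t) = t"
    unfolding distr_W .
  then show "AE \<omega> in M. e (g (W \<omega>)) = W \<omega>"
    by (subst (asm) AE_distr_iff) auto
qed

instance prod :: (polish_space, polish_space) polish_space ..

lemma (in prob_space) copy_in_same_cell_determining:
  fixes V :: "'a \<Rightarrow> real" and Y :: "'a \<Rightarrow> 'd::polish_space" and cell :: "'d \<Rightarrow> int"
  assumes V[measurable]: "V \<in> borel_measurable M" and [measurable]: "Y \<in> borel_measurable M"
    and cell: "cell \<in> measurable borel (count_space UNIV)"
    and no_atoms_V: "\<And>v. measure (distr M borel V) {v} = 0"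
    and no_atoms: "\<And>y. measure (distr M borel Y) {y} = 0"
    and ceiling_V: "\<And>\<omega>. \<omega> \<in> space M \<Longrightarrow> \<lceil>V \<omega>\<rceil> = cell (Y \<omega>)"
  obtains Z G where "Z \<in> borel_measurable M" "distr M borel Z = distr M borel Y"
    "AE \<omega> in M. cell (Z \<omega>) = cell (Y \<omega>)"
    "G \<in> borel_measurable borel" "AE \<omega> in M. V \<omega> = G (Z \<omega>)"
proof -
  obtain e :: "'d \<Rightarrow> real" and g where [measurable]: "e \<in> borel_measurable borel" "g \<in> borel_measurable borel"
    and g_e: "\<And>y. g (e y) = y" and ceiling_e: "\<And>y. \<lceil>e y\<rceil> = cell y"
    using borel_embedding_into_real_with_ceiling[OF cell] by blast
  have eY[measurable]: "(\<lambda>\<omega>. e (Y \<omega>)) \<in> borel_measurable M" by measurable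
  have no_atoms_eY: "measure (distr M borel (\<lambda>\<omega>. e (Y \<omega>))) {t} = 0" for t
    by (rule measure_distr_singleton_eq_0_if_factor[where R=g]) (auto simp: g_e no_atoms)
  have "\<lceil>V \<omega>\<rceil> = \<lceil>e (Y \<omega>)\<rceil>" if "\<omega> \<in> space M" for \<omega>
    using that by (simp add: ceiling_V ceiling_e)
  then obtain W G where [measurable]: "W \<in> borel_measurable M" "G \<in> borel_measurable borel"
    and distr_W: "distr M borel W = distr M borel (\<lambda>\<omega>. e (Y \<omega>))"
    and V_G: "AE \<omega> in M. V \<omega> = G (W \<omega>)" and ceiling_W: "AE \<omega> in M. \<lceil>W \<omega>\<rceil> = \<lceil>V \<omega>\<rceil>"
    using quantile_coupling_same_ceiling[OF V eY no_atoms_V no_atoms_eY] by blast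
  define Z where "Z \<omega> = g (W \<omega>)" for \<omega>
  have [measurable]: "Z \<in> borel_measurable M" unfolding Z_def by measurable
  have distr_Z: "distr M borel Z = distr M borel Y" and e_Z: "AE \<omega> in M. e (Z \<omega>) = W \<omega>"
    using distr_left_inverse_transfer[of W M Y e g] g_e distr_W by (simp_all add: Z_def[abs_def])
  from e_Z ceiling_W AE_space have "AE \<omega> in M. cell (Z \<omega>) = cell (Y \<omega>)"
    by eventually_elim (simp add: ceiling_V flip: ceiling_e)
  moreover from e_Z V_G have "AE \<omega> in M. V \<omega> = G (e (Z \<omega>))"
    by eventually_elim simp
  moreover have "(\<lambda>z. G (e z)) \<in> borel_measurable borel" by measurable
  ultimately show thesis using distr_Z by (intro that) auto
qed

lemma (in prob_space) coupling_in_same_cell: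
  fixes X :: "'a \<Rightarrow> 'c::polish_space" and Y :: "'a \<Rightarrow> 'd::polish_space"
    and cell :: "'d \<Rightarrow> int"
  assumes [measurable]: "X \<in> borel_measurable M" "Y \<in> borel_measurable M"
    and cell[measurable]: "cell \<in> measurable borel (count_space UNIV)"
    and no_atoms: "\<And>y. measure (distr M borel Y) {y} = 0"
  shows "\<exists>Z\<in>borel_measurable M. distr M borel Z = distr M borel Y \<and>
    (AE \<omega> in M. cell (Z \<omega>) = cell (Y \<omega>)) \<and>
    (\<exists>f. f \<in> borel_measurable borel \<and> (AE \<omega> in M. X \<omega> = f (Z \<omega>)))"
proof -
  have [measurable]: "(fst :: 'd \<times> 'c \<Rightarrow> 'd) \<in> borel_measurable borel"
    and [measurable]: "(snd :: 'd \<times> 'c \<Rightarrow> 'c) \<in> borel_measurable borel"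
    by (intro borel_measurable_continuous_onI continuous_intros)+
  have cell_fst: "(\<lambda>p::'d \<times> 'c. cell (fst p)) \<in> measurable borel (count_space UNIV)"
    by measurable
  obtain e :: "'d \<times> 'c \<Rightarrow> real" and g where [measurable]: "e \<in> borel_measurable borel" "g \<in> borel_measurable borel"
    and g_e: "\<And>p. g (e p) = p" and ceiling_e: "\<And>p. \<lceil>e p\<rceil> = cell (fst p)"
    using borel_embedding_into_real_with_ceiling[OF cell_fst] by blast
  define V where "V \<omega> = e (Y \<omega>, X \<omega>)" for \<omega>
  have V[measurable]: "V \<in> borel_measurable M" unfolding V_def by measurable
  have no_atoms_V: "measure (distr M borel V) {v} = 0" for v
    by (rule measure_distr_singleton_eq_0_if_factor[where R="\<lambda>v. fst (g v)"])
       (auto simp: V_def g_e no_atoms)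
  have ceiling_V: "\<lceil>V \<omega>\<rceil> = cell (Y \<omega>)" for \<omega>
    by (simp add: V_def ceiling_e)
  have X_V: "X \<omega> = snd (g (V \<omega>))" for \<omega>
    by (simp add: V_def g_e)
  obtain Z G where "Z \<in> borel_measurable M" "distr M borel Z = distr M borel Y"
    "AE \<omega> in M. cell (Z \<omega>) = cell (Y \<omega>)"
    and [measurable]: "G \<in> borel_measurable borel" and V_G: "AE \<omega> in M. V \<omega> = G (Z \<omega>)"
    using copy_in_same_cell_determining[OF V assms(2) cell no_atoms_V no_atoms ceiling_V] by blast
  moreover have "(\<lambda>z. snd (g (G z))) \<in> borel_measurable borel" by measurable
  moreover from V_G have "AE \<omega> in M. X \<omega> = snd (g (G (Z \<omega>)))"
    by eventually_elim (simp add: X_V)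
  ultimately show ?thesis by blast
qed

lemma atomless_imp_measure_singleton_eq_0:
  assumes "atomless N" "{x} \<in> sets N"
  shows "measure N {x} = 0"
proof (rule ccontr)
  assume "measure N {x} \<noteq> 0"
  then have "measure N {x} > 0" using measure_nonneg[of N "{x}"] by linarith
  moreover have "\<forall>B\<in>sets N. B \<subseteq> {x} \<longrightarrow> measure N B = 0 \<or> measure N B = measure N {x}"
    by (auto simp: subset_singleton_iff)
  ultimately show False using assms unfolding atomless_def by blast
qed

theorem theorem12:
  fixes M :: "'w measure"
    and X :: "'w \<Rightarrow> 'a::polish_space"
    and Y :: "'w \<Rightarrow> 'b::polish_space"
    and \<epsilon> :: real
  assumes "prob_space M"
    and "X \<in> borel_measurable M"
    and "Y \<in> borel_measurable M"
    and "atomless (distr M borel Y)"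
    and "\<epsilon> > 0"
  shows "\<exists>Z \<in> borel_measurable M.
           distr M borel Z = distr M borel Y \<and>
           (AE \<omega> in M. dist (Y \<omega>) (Z \<omega>) \<le> \<epsilon>) \<and>
           (\<exists>f :: 'b \<Rightarrow> 'a. f \<in> borel_measurable borel \<and> (AE \<omega> in M. X \<omega> = f (Z \<omega>)))"
proof -
  interpret prob_space M by fact
  obtain cell :: "'b \<Rightarrow> int" and center where cell: "cell \<in> measurable borel (count_space UNIV)"
    and near_center: "\<And>y. dist (center (cell y)) y < \<epsilon> / 2"
    using small_cellsE[of "\<epsilon> / 2"] assms(5) by auto
  have "measure (distr M borel Y) {y} = 0" for y
    using atomless_imp_measure_singleton_eq_0[OF assms(4)] by simp
  then obtain Z f where "Z \<in> borel_measurable M" "distr M borel Z = distr M borel Y"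
    and same_cell: "AE \<omega> in M. cell (Z \<omega>) = cell (Y \<omega>)"
    and "f \<in> borel_measurable borel" "AE \<omega> in M. X \<omega> = f (Z \<omega>)"
    using coupling_in_same_cell[OF assms(2,3) cell] by blast
  moreover from same_cell have "AE \<omega> in M. dist (Y \<omega>) (Z \<omega>) \<le> \<epsilon>"
  proof eventually_elim
    case (elim \<omega>)
    let ?c = "center (cell (Y \<omega>))"
    have "dist (Y \<omega>) (Z \<omega>) \<le> dist ?c (Y \<omega>) + dist ?c (Z \<omega>)"
      by (rule dist_triangle3)
    also have "\<dots> < \<epsilon>"
      using near_center[of "Y \<omega>"] near_center[of "Z \<omega>"] elim by simp
    finally show ?case by simp
  qed
  ultimately show ?thesis by blast
qed

end
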